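(* Let $k\ge 1$ be an integer, let $C(k)=\prod_{p\le 2k,\ p\text{ prime}}p$, and let $a\in\mathbb{C}$ with $a\neq 0$. Define $$Z_a^k=\Big\{(\zeta_1,\dots,\zeta_k)\ :\ \zeta_i \text{ roots of unity, and } \exists\, a_1,\dots,a_k\in\mathbb{Q} \text{ with } \sum_{i=1}^k a_i\zeta_i=a \text{ and } \sum_{i\in I}a_i\zeta_i\neq 0 \text{ for all } \emptyset\neq I\subseteq[k]\Big\}.$$ Then $|Z_a^k|\le (k\cdot C(k))^k$.
   Context: $[k]=\{1,\dots,k\}$. *)

theory Defs
  imports Complex_Main "HOL-Computational_Algebra.Primes"
begin

definition root_of_unity :: "complex \<Rightarrow> bool" where
  "root_of_unity z \<longleftrightarrow> (\<exists>n::nat. n > 0 \<and> z ^ n = 1)"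

definition primorial_2k :: "nat \<Rightarrow> nat" where
  "primorial_2k k = (\<Prod>p\<in>{p. prime p \<and> p \<le> 2 * k}. p)"

text \<open>Tuples (zeta_1,...,zeta_k) are represented as lists of length k,
  with zeta_(i+1) = zs ! i for i < k.\<close>
definition Z_set :: "complex \<Rightarrow> nat \<Rightarrow> complex list set" where
  "Z_set a k = {zs. length zs = k \<and> (\<forall>i<k. root_of_unity (zs ! i)) \<and>
     (\<exists>c :: nat \<Rightarrow> complex. (\<forall>i<k. c i \<in> \<rat>) \<and>
        (\<Sum>i<k. c i * zs ! i) = a \<and>
        (\<forall>I. I \<subseteq> {..<k} \<and> I \<noteq> {} \<longrightarrow> (\<Sum>i\<in>I. c i * zs ! i) \<noteq> 0))}"

end

theory Submission
  imports Defs "HOL-Computational_Algebra.Polynomial_Factorial" "HOL-Computational_Algebra.Squarefree"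
    "HOL-Number_Theory.Cong"
begin

text \<open>
  Fix one tuple \<open>\<eta> \<in> Z\<^sub>a\<^sup>k\<close>. For any \<open>\<zeta> \<in> Z\<^sub>a\<^sup>k\<close>, subtracting the two representations of \<open>a\<close>
  gives a vanishing rational combination of the \<open>2k\<close> roots \<open>\<zeta>\<^sub>i, \<eta>\<^sub>j\<close>. A minimal vanishing
  subsum through \<open>\<zeta>\<^sub>i\<close> must involve some \<open>\<eta>\<^sub>j\<close>, since no subsum of the \<open>\<zeta>\<close>-part vanishes,
  and by Mann's theorem the order of \<open>\<zeta>\<^sub>i/\<eta>\<^sub>j\<close> is squarefree with prime factors at most \<open>2k\<close>,
  hence divides \<open>C(k)\<close>. So every \<open>\<zeta>\<^sub>i\<close> lies among the \<open>k C(k)\<close> numbers \<open>\<eta>\<^sub>j w\<close> with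
  \<open>w\<close> a \<open>C(k)\<close>-th root of unity.

  Mann's theorem rests on the stability of vanishing rational combinations of \<open>m\<close>-th roots
  of unity under \<open>\<zeta> \<mapsto> \<zeta>\<^sup>u\<close> for \<open>u\<close> coprime to \<open>m\<close>, i.e. on the fact that the minimal
  polynomial of a root of unity is preserved by \<open>z \<mapsto> z\<^sup>q\<close> for primes \<open>q \<nmid> m\<close>; this is derived
  from the Frobenius congruence \<open>f(X)\<^sup>q \<equiv> f(X\<^sup>q) (mod q)\<close> in \<open>\<int>[X]\<close> and the separability of
  \<open>X\<^sup>m - 1\<close>.
\<close>

abbreviation of_int_poly :: "int poly \<Rightarrow> 'a::comm_ring_1 poly" where
  "of_int_poly \<equiv> map_poly of_int"

lemma of_int_poly_pCons [simp]: "of_int_poly (pCons a p) = pCons (of_int a) (of_int_poly p)"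
  by (simp add: map_poly_pCons)

lemma of_int_poly_add [simp]: "of_int_poly (p + q) = of_int_poly p + of_int_poly q"
  by (intro poly_eqI) (simp add: coeff_map_poly)

lemma of_int_poly_diff [simp]: "of_int_poly (p - q) = of_int_poly p - of_int_poly q"
  by (intro poly_eqI) (simp add: coeff_map_poly)

lemma of_int_poly_minus [simp]: "of_int_poly (- p) = - of_int_poly p"
  by (intro poly_eqI) (simp add: coeff_map_poly)

lemma of_int_poly_smult [simp]: "of_int_poly (smult c p) = smult (of_int c) (of_int_poly p)"
  by (intro poly_eqI) (simp add: coeff_map_poly)

lemma of_int_poly_mult [simp]: "of_int_poly (p * q) = of_int_poly p * of_int_poly q"
  by (induction p) (simp_all add: mult_pCons_left)

lemma of_int_poly_power [simp]: "of_int_poly (p ^ n) = of_int_poly p ^ n"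
  by (induction n) simp_all

lemma of_int_poly_monom [simp]: "of_int_poly (monom c n) = monom (of_int c) n"
  by (simp add: map_poly_monom)

lemma of_int_poly_pcompose [simp]: "of_int_poly (p \<circ>\<^sub>p q) = of_int_poly p \<circ>\<^sub>p of_int_poly q"
  by (induction p) (simp_all add: pcompose_pCons)

lemma of_int_poly_pderiv [simp]: "of_int_poly (pderiv p) = pderiv (of_int_poly p)"
  by (induction p) (simp_all add: pderiv_pCons)

lemma of_int_poly_sum [simp]: "of_int_poly (sum f A) = (\<Sum>x\<in>A. of_int_poly (f x))"
  by (induction A rule: infinite_finite_induct) simp_all

lemma prime_dvd_power_add_sub:
  fixes a b :: "'a::comm_ring_1"
  assumes p: "prime p"
  shows "of_nat p dvd (a + b) ^ p - a ^ p - b ^ p"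
proof -
  have p0: "p > 0" using p prime_gt_0_nat by blast
  have "(a + b) ^ p = (\<Sum>k\<in>{..p}. of_nat (p choose k) * a ^ k * b ^ (p - k))"
    by (rule binomial_ring)
  also have "{..p} = insert p (insert 0 {1..<p})" using p0 by auto
  also have "(\<Sum>k\<in>insert p (insert 0 {1..<p}). of_nat (p choose k) * a ^ k * b ^ (p - k)) =
      a ^ p + (b ^ p + (\<Sum>k\<in>{1..<p}. of_nat (p choose k) * a ^ k * b ^ (p - k)))"
    using p0 by (subst sum.insert; auto)+
  finally have "(a + b) ^ p - a ^ p - b ^ p =
      (\<Sum>k\<in>{1..<p}. of_nat (p choose k) * a ^ k * b ^ (p - k))"
    by simp
  also have "of_nat p dvd \<dots>"
  proof (intro dvd_sum dvd_mult2)
    fix k assume "k \<in> {1..<p}"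
    then have "p dvd p choose k" using p by (intro dvd_choose_prime) auto
    then show "of_nat p dvd (of_nat (p choose k) :: 'a)" by (metis dvd_def of_nat_mult)
  qed
  finally show ?thesis .
qed

lemma prime_dvd_power_sub_self_of_nat:
  assumes p: "prime p"
  shows "of_nat p dvd (of_nat n :: 'a::comm_ring_1) ^ p - of_nat n"
proof (induction n)
  case 0
  then show ?case using p by (simp add: prime_gt_0_nat power_0_left)
next
  case (Suc n)
  have "(of_nat (Suc n) :: 'a) ^ p - of_nat (Suc n) =
      ((of_nat n + 1) ^ p - of_nat n ^ p - 1 ^ p) + (of_nat n ^ p - of_nat n)"
    by (simp add: add.commute)
  then show ?case
    using prime_dvd_power_add_sub[OF p, of "of_nat n :: 'a" 1] Suc by (metis dvd_add)
qed

lemma prime_dvd_power_sub_self_of_int: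
  assumes p: "prime p"
  shows "of_nat p dvd (of_int a :: 'a::comm_ring_1) ^ p - of_int a"
proof -
  have p0: "p > 0" using p prime_gt_0_nat by blast
  define x :: 'a where "x = of_nat (nat (a mod int p))"
  define y :: 'a where "y = of_nat p * of_int (a div int p)"
  have "x = of_int (a mod int p)" unfolding x_def using p0 by simp
  then have "(of_int a :: 'a) = x + y" unfolding y_def
    by (metis mod_mult_div_eq of_int_add of_int_mult of_int_of_nat_eq)
  then have "(of_int a :: 'a) ^ p - of_int a =
      ((x + y) ^ p - x ^ p - y ^ p) + (x ^ p - x) + (y ^ p - y)"
    by simp
  moreover have "of_nat p dvd y" unfolding y_def by simp
  then have "of_nat p dvd y ^ p - y" using p0 by (intro dvd_diff dvd_trans[OF _ dvd_power]) auto
  ultimately show ?thesis unfolding x_def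
    by (metis dvd_add prime_dvd_power_add_sub[OF p] prime_dvd_power_sub_self_of_nat[OF p])
qed

lemma prime_dvd_power_sub_pcompose:
  fixes f :: "int poly"
  assumes p: "prime p"
  shows "of_nat p dvd f ^ p - f \<circ>\<^sub>p monom 1 p"
proof (induction f)
  case 0
  then show ?case using p by (simp add: prime_gt_0_nat power_0_left)
next
  case (pCons a h)
  define Y where "Y = monom 1 1 * h"
  have "pCons a h = [:a:] + Y" unfolding Y_def by (simp add: monom_Suc monom_0)
  moreover have "Y ^ p = monom 1 p * h ^ p" unfolding Y_def by (simp add: power_mult_distrib monom_power)
  moreover have "pCons a h \<circ>\<^sub>p monom 1 p = [:a:] + monom 1 p * (h \<circ>\<^sub>p monom 1 p)"
    by (rule pcompose_pCons)
  ultimately have "pCons a h ^ p - pCons a h \<circ>\<^sub>p monom 1 p =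
      (([:a:] + Y) ^ p - [:a:] ^ p - Y ^ p) + ([:a:] ^ p - [:a:]) +
      monom 1 p * (h ^ p - h \<circ>\<^sub>p monom 1 p)"
    by (simp add: algebra_simps)
  moreover have "of_nat p dvd [:a:] ^ p - [:a:]"
    using prime_dvd_power_sub_self_of_int[OF p, of a, where 'a="int poly"] by (simp add: of_int_poly)
  ultimately show ?case
    using pCons.IH prime_dvd_power_add_sub[OF p] by (metis dvd_add dvd_mult)
qed

lemma fract_poly_dvd_smult_imp_dvd:
  fixes f F :: "int poly"
  assumes "content f = 1" "c \<noteq> 0" "f dvd smult c F"
  shows "f dvd F"
proof -
  have "fract_poly f dvd smult (to_fract c) (fract_poly F)"
    using fract_poly_dvd[OF assms(3)] by simp
  then have "fract_poly f dvd fract_poly F" using assms(2) by (simp add: dvd_smult_iff)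
  then show ?thesis using assms(1) by (rule fract_poly_dvdD)
qed

lemma poly_of_int_poly_primitive_part_eq_0:
  fixes z :: "'a::field_char_0"
  assumes "F \<noteq> 0"
  shows "poly (of_int_poly (primitive_part F)) z = 0 \<longleftrightarrow> poly (of_int_poly F) z = 0"
proof -
  have "poly (of_int_poly F) z = of_int (content F) * poly (of_int_poly (primitive_part F)) z"
    by (subst content_times_primitive_part[symmetric, of F]) (simp only: of_int_poly_smult, simp)
  then show ?thesis using assms by simp
qed

lemma int_minimal_polynomial:
  fixes z :: "'a::field_char_0"
  assumes E: "lead_coeff E = 1" "poly (of_int_poly E) z = 0"
  obtains f :: "int poly" where "lead_coeff f = 1" "poly (of_int_poly f) z = 0"
    "\<And>F. poly (of_int_poly F) z = 0 \<Longrightarrow> f dvd F"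
proof -
  define root where "root F \<longleftrightarrow> F \<noteq> 0 \<and> poly (of_int_poly F) z = 0" for F :: "int poly"
  have "root E" using E unfolding root_def by auto
  then obtain F0 where F0: "root F0" and least: "\<And>G. root G \<Longrightarrow> degree F0 \<le> degree G"
    using ex_has_least_nat[of root E degree] by blast
  define f0 where "f0 = primitive_part F0"
  have f0: "f0 \<noteq> 0" "poly (of_int_poly f0) z = 0" "content f0 = 1"
    using F0 poly_of_int_poly_primitive_part_eq_0[of F0 z] unfolding f0_def root_def by auto
  have f0_dvd: "f0 dvd F" if Fz: "poly (of_int_poly F) z = 0" for F
  proof -
    obtain Q R where QR: "pseudo_divmod F f0 = (Q, R)" by fastforce
    define c where "c = lead_coeff f0 ^ (Suc (degree F) - degree f0)"
    have c: "c \<noteq> 0" unfolding c_def using f0 by simp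
    have div: "smult c F = f0 * Q + R" "R = 0 \<or> degree R < degree f0"
      using pseudo_divmod[OF f0(1) QR] unfolding c_def by auto
    have "poly (of_int_poly R) z = 0"
      using arg_cong[OF div(1), of "\<lambda>G. poly (of_int_poly G) z"] Fz f0(2) by simp
    then have "R = 0" using div(2) least[of R] unfolding root_def f0_def by fastforce
    then have "f0 dvd smult c F" using div(1) by simp
    then show ?thesis using fract_poly_dvd_smult_imp_dvd[OF f0(3) c] by blast
  qed
  obtain g where "E = f0 * g" using f0_dvd[OF E(2)] by (elim dvdE)
  then have "lead_coeff f0 * lead_coeff g = 1" using E(1) by (simp add: lead_coeff_mult)
  then have unit: "lead_coeff f0 * lead_coeff f0 = 1" using zmult_eq_1_iff by auto
  define f where "f = smult (lead_coeff f0) f0"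
  have "lead_coeff f = 1" unfolding f_def using unit f0(1) by simp
  moreover have "poly (of_int_poly f) z = 0" unfolding f_def using f0(2) by simp
  moreover have "f dvd F" if Fz: "poly (of_int_poly F) z = 0" for F
  proof -
    obtain G where G: "F = f0 * G" using f0_dvd[OF Fz] by (elim dvdE)
    have "f * smult (lead_coeff f0) G = smult (lead_coeff f0 * lead_coeff f0) (f0 * G)"
      unfolding f_def by (simp only: mult_smult_left mult_smult_right smult_smult)
    then have "F = f * smult (lead_coeff f0) G" using G unit by simp
    then show ?thesis by (rule dvdI)
  qed
  ultimately show ?thesis using that by blast
qed

lemma monic_dvd_smult_sub_const_imp_dvd:
  fixes f P :: "int poly"
  assumes f: "lead_coeff f = 1" "degree f > 0" and dvd: "f dvd smult q P - [:m:]"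
  shows "q dvd m"
proof -
  obtain S R where SR: "pseudo_divmod P f = (S, R)" by fastforce
  have f0: "f \<noteq> 0" using f by auto
  have div: "P = f * S + R" "R = 0 \<or> degree R < degree f"
    using pseudo_divmod[OF f0 SR] f by auto
  have "smult q R - [:m:] = (smult q P - [:m:]) - f * smult q S"
    unfolding div(1) by (simp add: smult_add_right mult_smult_right)
  then have fR: "f dvd smult q R - [:m:]" using dvd by (simp only: dvd_diff dvd_triv_left)
  have lt: "degree (smult q R - [:m:]) < degree f"
  proof -
    have "degree (smult q R - [:m:]) \<le> max (degree (smult q R)) (degree [:m:])"
      by (rule degree_diff_le_max)
    also have "\<dots> \<le> degree R" by (simp add: degree_smult_le)
    finally show ?thesis using div(2) f(2) by auto
  qed
  have "smult q R - [:m:] = 0"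
    using dvd_imp_degree_le[OF fR] lt by (meson not_le)
  then have "coeff (smult q R) 0 = m" by simp
  then show ?thesis by (auto intro: dvdI)
qed

lemma pderiv_cofactor_root_unity:
  fixes w :: "'a::idom"
  assumes fg: "monom 1 m - 1 = f * g" and g: "poly g w = 0" and w: "w ^ m = 1" "m > 0"
  shows "of_nat m = poly f w * poly (pderiv g) w * w"
proof -
  have "of_nat m * w ^ (m - 1) = poly (pderiv (monom 1 m - 1)) w"
    by (simp add: pderiv_monom poly_monom pderiv_diff)
  also have "\<dots> = poly f w * poly (pderiv g) w"
    unfolding fg using g by (simp add: pderiv_mult)
  finally show ?thesis
    using w by (metis mult.assoc mult.right_neutral power_minus_mult)
qed

text \<open>If \<open>f\<close> is the minimal polynomial of a root of unity \<open>z\<close> of order dividing \<open>m\<close> and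
  \<open>q \<nmid> m\<close>, then \<open>z\<^sup>q\<close> is again a root of \<open>f\<close>: otherwise \<open>z\<^sup>q\<close> is a root of the cofactor \<open>g\<close>
  of \<open>f\<close> in \<open>X\<^sup>m - 1\<close>, and differentiating \<open>X\<^sup>m - 1 = f g\<close> at \<open>z\<^sup>q\<close> together with
  \<open>f(z\<^sup>q) \<equiv> f(z)\<^sup>q = 0 (mod q)\<close> exhibits \<open>m\<close> as \<open>q\<close> times an algebraic integer.\<close>
lemma int_minimal_polynomial_root_pow_prime:
  fixes z :: "'a::field_char_0" and f :: "int poly"
  assumes zm: "z ^ m = 1" "m > 0"
    and f: "lead_coeff f = 1" "poly (of_int_poly f) z = 0"
      "\<And>F. poly (of_int_poly F) z = 0 \<Longrightarrow> f dvd F"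
    and q: "prime q" "\<not> q dvd m"
  shows "poly (of_int_poly f) (z ^ q) = 0"
proof (rule ccontr)
  define w where "w = z ^ q"
  assume fw: "poly (of_int_poly f) (z ^ q) \<noteq> 0"
  then have fw: "poly (of_int_poly f) w \<noteq> 0" unfolding w_def .
  have wm: "w ^ m = 1" unfolding w_def using zm by (metis power_mult power_one mult.commute)
  have Ez: "poly (of_int_poly (monom 1 m - 1)) z = 0" using zm by (simp add: poly_monom)
  obtain g where g: "monom 1 m - 1 = f * g" using f(3)[OF Ez] by (elim dvdE)
  have g': "monom 1 m - 1 = of_int_poly f * (of_int_poly g :: 'a poly)"
    using arg_cong[OF g, of "of_int_poly :: int poly \<Rightarrow> 'a poly"] by simp
  have "poly (monom 1 m - 1) w = 0" using wm by (simp add: poly_monom)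
  then have "poly (of_int_poly g) w = 0" using fw unfolding g' by simp
  then have "of_nat m = poly (of_int_poly f) w * poly (pderiv (of_int_poly g)) w * w"
    using pderiv_cofactor_root_unity[OF g' _ wm zm(2)] by blast
  moreover obtain R where R: "f ^ q - f \<circ>\<^sub>p monom 1 q = smult (int q) R"
    using prime_dvd_power_sub_pcompose[OF q(1), of f] by (auto simp: of_nat_poly elim!: dvdE)
  have "- poly (of_int_poly f) w = of_nat q * poly (of_int_poly R) z"
    using arg_cong[OF R, of "\<lambda>G. poly (of_int_poly G) z"] f(2) prime_gt_0_nat[OF q(1)]
    by (simp add: poly_pcompose poly_monom w_def zero_power)
  ultimately have "of_nat m = of_nat q * poly (of_int_poly R) z * (- poly (pderiv (of_int_poly g)) w * w)"
    by (metis minus_mult_minus mult.assoc)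
  also have "\<dots> = of_nat q * poly (of_int_poly (R * (- (pderiv g \<circ>\<^sub>p monom 1 q) * monom 1 q))) z"
    by (simp add: poly_pcompose poly_monom w_def)
  finally have "poly (of_int_poly (smult (int q) (R * (- (pderiv g \<circ>\<^sub>p monom 1 q) * monom 1 q)) - [:int m:])) z = 0"
    by simp
  then have "f dvd smult (int q) (R * (- (pderiv g \<circ>\<^sub>p monom 1 q) * monom 1 q)) - [:int m:]"
    by (rule f(3))
  moreover have "degree f > 0"
  proof (rule ccontr)
    assume "\<not> degree f > 0"
    then have "f = [:1:]" using f(1) by (metis degree_0_id gr0I)
    then show False using f(2) by simp
  qed
  ultimately have "int q dvd int m" using f(1) monic_dvd_smult_sub_const_imp_dvd by blast
  then show False using q(2) by simp
qed

lemma int_poly_root_pow_prime: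
  fixes z :: "'a::field_char_0" and F :: "int poly"
  assumes zm: "z ^ m = 1" "m > 0" and q: "prime q" "\<not> q dvd m"
    and F: "poly (of_int_poly F) z = 0"
  shows "poly (of_int_poly F) (z ^ q) = 0"
proof -
  have "lead_coeff (- 1 + monom 1 m :: int poly) = 1"
    using lead_coeff_add_le[of "- 1" "monom 1 m :: int poly"] zm(2) by (simp add: degree_monom_eq)
  then have "lead_coeff (monom 1 m - 1 :: int poly) = 1" by simp
  moreover have "poly (of_int_poly (monom 1 m - 1)) z = 0" using zm by (simp add: poly_monom)
  ultimately obtain f where f: "lead_coeff f = 1" "poly (of_int_poly f) z = 0"
    "\<And>F. poly (of_int_poly F) z = 0 \<Longrightarrow> f dvd F"
    using int_minimal_polynomial by blast
  obtain G where "F = f * G" using f(3)[OF F] by (elim dvdE)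
  then show ?thesis using int_minimal_polynomial_root_pow_prime[OF zm f q] by simp
qed

lemma int_poly_root_pow_coprime:
  fixes z :: "'a::field_char_0" and F :: "int poly"
  assumes "z ^ m = 1" "m > 0" "coprime u m" "poly (of_int_poly F) z = 0"
  shows "poly (of_int_poly F) (z ^ u) = 0"
  using assms
proof (induction u arbitrary: z rule: less_induct)
  case (less u)
  show ?case
  proof (cases "u \<le> 1")
    case True
    then consider "u = 0" | "u = 1" by linarith
    then show ?thesis
    proof cases
      case 1
      then have "m = 1" using less.prems(3) by simp
      then show ?thesis using 1 less.prems(1,4) by simp
    next
      case 2
      then show ?thesis using less.prems(4) by simp
    qed
  next
    case False
    then obtain q where q: "prime q" "q dvd u" using prime_factor_nat[of u] by auto
    then obtain u' where u: "u = q * u'" by (elim dvdE)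
    have "u' < u" using False u prime_gt_1_nat[OF q(1)] by (cases "u' = 0") auto
    have "coprime q m" "coprime u' m" using less.prems(3) u by simp_all
    then have "\<not> q dvd m" using q(1) by (metis coprime_absorb_left not_prime_unit)
    have "(z ^ q) ^ m = 1" using less.prems(1) by (metis power_mult power_one mult.commute)
    moreover have "poly (of_int_poly F) (z ^ q) = 0"
      using int_poly_root_pow_prime[OF less.prems(1,2) q(1) \<open>\<not> q dvd m\<close> less.prems(4)] .
    ultimately show ?thesis
      using less.IH[OF \<open>u' < u\<close> _ less.prems(2) \<open>coprime u' m\<close>] u by (simp add: power_mult)
  qed
qed

lemma Rats_common_denominator:
  fixes c :: "'i \<Rightarrow> 'a::field_char_0"
  assumes "finite K" "\<forall>i\<in>K. c i \<in> \<rat>"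
  obtains D :: int where "D > 0" "\<forall>i\<in>K. of_int D * c i \<in> \<int>"
  using assms
proof (induction K arbitrary: thesis rule: finite_induct)
  case empty
  show ?case by (rule empty.prems(1)[of 1]) simp_all
next
  case (insert i K)
  obtain D :: int where D: "D > 0" "\<forall>j\<in>K. of_int D * c j \<in> \<int>"
    using insert.IH insert.prems(2) by blast
  obtain r where r: "c i = of_rat r" using insert.prems(2) by (auto elim: Rats_cases)
  obtain a b where ab: "quotient_of r = (a, b)" by fastforce
  have b: "b > 0" using quotient_of_denom_pos[OF ab] .
  have "c i = of_int a / of_int b" using r quotient_of_div[OF ab] by (simp add: of_rat_divide)
  then have "of_int (D * b) * c i = of_int (D * a)" using b by simp
  moreover have "of_int (D * b) * c j = of_int b * (of_int D * c j)" for j by simp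
  ultimately have "\<forall>j\<in>insert i K. of_int (D * b) * c j \<in> \<int>"
    using D(2) by (metis Ints_mult Ints_of_int insert_iff)
  then show ?case using insert.prems(1)[of "D * b"] D(1) b by simp
qed

lemma root_unity_eq_cis_power:
  assumes "m > 0" "x ^ m = 1"
  obtains k where "x = cis (2 * pi / real m) ^ k"
proof -
  obtain k where "x = cis (2 * pi * real k / real m)"
    using bij_betw_roots_unity[OF assms(1)] assms(2) unfolding bij_betw_def by auto
  then have "x = cis (2 * pi / real m) ^ k" by (simp add: DeMoivre field_simps)
  then show ?thesis by (rule that)
qed

lemma rat_combination_roots_unity_pow_coprime:
  fixes c x :: "'i \<Rightarrow> complex"
  assumes fin: "finite K" and rat: "\<forall>i\<in>K. c i \<in> \<rat>"
    and roots: "m > 0" "\<forall>i\<in>K. x i ^ m = 1"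
    and van: "(\<Sum>i\<in>K. c i * x i) = 0" and u: "coprime u m"
  shows "(\<Sum>i\<in>K. c i * x i ^ u) = 0"
proof -
  define z where "z = cis (2 * pi / real m)"
  have z: "z ^ m = 1" unfolding z_def using roots(1) by (simp add: DeMoivre)
  have "\<exists>k. x i = z ^ k" if "i \<in> K" for i
    using root_unity_eq_cis_power[OF roots(1)] roots(2) that unfolding z_def by blast
  then obtain e where e: "\<forall>i\<in>K. x i = z ^ e i" by (metis bchoice)
  obtain D :: int where D: "D > 0" "\<forall>i\<in>K. of_int D * c i \<in> \<int>"
    using Rats_common_denominator[OF fin rat] by blast
  have "\<exists>b. of_int D * c i = of_int b" if "i \<in> K" for i using D(2) that by (auto elim: Ints_cases)
  then obtain B where B: "\<forall>i\<in>K. of_int D * c i = of_int (B i)" by (metis bchoice)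
  define F where "F = (\<Sum>i\<in>K. monom (B i) (e i))"
  have F: "poly (of_int_poly F) y = of_int D * (\<Sum>i\<in>K. c i * y ^ e i)" for y :: complex
  proof -
    have "poly (of_int_poly F) y = (\<Sum>i\<in>K. of_int (B i) * y ^ e i)"
      unfolding F_def by (simp add: poly_sum poly_monom)
    also have "\<dots> = (\<Sum>i\<in>K. of_int D * (c i * y ^ e i))"
      using B by (intro sum.cong refl) (simp add: mult.assoc[symmetric])
    finally show ?thesis by (simp add: sum_distrib_left)
  qed
  have "poly (of_int_poly F) z = 0" using F[of z] van e by simp
  then have "poly (of_int_poly F) (z ^ u) = 0" by (rule int_poly_root_pow_coprime[OF z roots(1) u])
  moreover have "(z ^ u) ^ e i = x i ^ u" if "i \<in> K" for i
    using e that by (simp flip: power_mult add: mult.commute)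
  ultimately show ?thesis using F[of "z ^ u"] D(1) by simp
qed

lemma sum_power_quotient_roots_unity:
  fixes \<eta> \<omega> :: "'a::field"
  assumes "p > 0" "\<eta> ^ p = 1" "\<omega> ^ p = 1"
  shows "(\<Sum>k<p. (\<eta> / \<omega>) ^ k) = (if \<eta> = \<omega> then of_nat p else 0)"
proof (cases "\<eta> = \<omega>")
  case False
  have "\<omega> \<noteq> 0" using assms by (auto simp: zero_power)
  then have "\<eta> / \<omega> \<noteq> 1" using False by simp
  then have "(\<Sum>k<p. (\<eta> / \<omega>) ^ k) = ((\<eta> / \<omega>) ^ p - 1) / (\<eta> / \<omega> - 1)" by (rule geometric_sum)
  then show ?thesis using assms False by (simp add: power_divide)
qed (use assms in \<open>auto simp: zero_power\<close>)

lemma fibre_sum_fourier_inversion: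
  fixes g y :: "'i \<Rightarrow> 'a::field"
  assumes fin: "finite K" and p: "p > 0" and y: "\<forall>i\<in>K. y i ^ p = 1" and \<omega>: "\<omega> ^ p = 1"
  shows "of_nat p * (\<Sum>i | i \<in> K \<and> y i = \<omega>. g i) = (\<Sum>k<p. (\<Sum>i\<in>K. g i * y i ^ k) / \<omega> ^ k)"
proof -
  have "(\<Sum>k<p. (\<Sum>i\<in>K. g i * y i ^ k) / \<omega> ^ k) = (\<Sum>k<p. \<Sum>i\<in>K. g i * (y i / \<omega>) ^ k)"
    by (simp add: sum_divide_distrib power_divide)
  also have "\<dots> = (\<Sum>i\<in>K. g i * (\<Sum>k<p. (y i / \<omega>) ^ k))"
    by (subst sum.swap) (simp add: sum_distrib_left)
  also have "\<dots> = (\<Sum>i\<in>K. if y i = \<omega> then of_nat p * g i else 0)"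
    using y by (intro sum.cong refl) (simp add: sum_power_quotient_roots_unity[OF p _ \<omega>])
  also have "\<dots> = of_nat p * (\<Sum>i | i \<in> K \<and> y i = \<omega>. g i)"
    using fin by (simp add: sum.inter_filter sum_distrib_left if_distrib cong: if_cong)
  finally show ?thesis ..
qed

lemma not_coprime_twist:
  fixes p m' k :: nat
  assumes p: "prime p" and nc: "\<not> coprime (1 + m' * k) (p * m')"
  shows "p dvd 1 + m' * k" "\<not> p dvd m'"
proof -
  have "coprime (1 + m' * k) m'"
  proof (rule coprimeI)
    fix d assume "d dvd 1 + m' * k" "d dvd m'"
    then show "is_unit d" by (metis dvd_add_left_iff dvd_mult2)
  qed
  then have "\<not> coprime (1 + m' * k) p" using nc by simp
  then show pdvd: "p dvd 1 + m' * k" using p by (metis prime_imp_coprime coprime_commute)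
  show "\<not> p dvd m'"
  proof
    assume "p dvd m'"
    then have "p dvd 1" using pdvd by (metis dvd_add_left_iff dvd_mult2)
    then show False using p by simp
  qed
qed

lemma not_coprime_twist_unique:
  fixes p m' k1 k2 :: nat
  assumes p: "prime p" and k: "k1 < p" "k2 < p"
    and nc: "\<not> coprime (1 + m' * k1) (p * m')" "\<not> coprime (1 + m' * k2) (p * m')"
  shows "k1 = k2"
proof -
  have "[1 + m' * k1 = 1 + m' * k2] (mod p)"
    using not_coprime_twist(1)[OF p nc(1)] not_coprime_twist(1)[OF p nc(2)]
    by (simp add: cong_def dvd_eq_mod_eq_0)
  then have "[m' * k1 = m' * k2] (mod p)" by (simp only: cong_add_lcancel_nat)
  moreover have "coprime m' p"
    using p not_coprime_twist(2)[OF p nc(1)] by (metis prime_imp_coprime coprime_commute)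
  ultimately have "[k1 = k2] (mod p)" by (simp add: cong_mult_lcancel_nat)
  then show ?thesis using k by (simp add: cong_def)
qed

lemma card_ge_if_onto_roots_unity:
  fixes y :: "'i \<Rightarrow> complex"
  assumes fin: "finite K" and p: "p > 0" and onto: "\<And>\<omega>. \<omega> ^ p = 1 \<Longrightarrow> \<omega> \<in> y ` K"
  shows "p \<le> card K"
proof -
  have "p = card {\<omega>::complex. \<omega> ^ p = 1}" using card_roots_unity_eq[OF p] by simp
  also have "\<dots> \<le> card (y ` K)" using fin onto by (intro card_mono) auto
  also have "\<dots> \<le> card K" using fin by (rule card_image_le)
  finally show ?thesis .
qed

definition minimal_vanishing_sum :: "'i set \<Rightarrow> ('i \<Rightarrow> 'a::comm_monoid_add) \<Rightarrow> bool" where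
  "minimal_vanishing_sum K f \<longleftrightarrow>
     sum f K = 0 \<and> (\<forall>I. I \<subseteq> K \<and> I \<noteq> {} \<and> sum f I = 0 \<longrightarrow> I = K)"

lemma minimal_vanishing_subsum_exists:
  assumes fin: "finite K" and i: "i \<in> K" and van: "sum f K = 0"
  obtains S where "S \<subseteq> K" "i \<in> S" "minimal_vanishing_sum S f"
proof -
  define P where "P S \<longleftrightarrow> S \<subseteq> K \<and> i \<in> S \<and> sum f S = 0" for S
  have "P K" using i van unfolding P_def by auto
  then obtain S where S: "P S" and least: "\<And>S'. P S' \<Longrightarrow> card S \<le> card S'"
    using ex_has_least_nat[of P K card] by blast
  have finS: "finite S" using S fin unfolding P_def by (auto intro: finite_subset)
  have "I = S" if I: "I \<subseteq> S" "I \<noteq> {}" "sum f I = 0" for I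
  proof (rule ccontr)
    assume ne: "I \<noteq> S"
    have finI: "finite I" using I(1) finS by (rule finite_subset)
    show False
    proof (cases "i \<in> I")
      case True
      then have "P I" using I S unfolding P_def by auto
      moreover have "card I < card S" using I(1) ne finS by (simp add: psubset_card_mono)
      ultimately show False using least[of I] by simp
    next
      case False
      have "sum f (S - I) = 0"
        using sum.subset_diff[OF I(1) finS, of f] S I(3) unfolding P_def by simp
      then have "P (S - I)" using S False unfolding P_def by auto
      moreover have "card (S - I) < card S"
        using card_Diff_subset[OF finI I(1)] card_gt_0_iff[of I] finI I(2) card_mono[OF finS I(1)]
        by linarith
      ultimately show False using least[of "S - I"] by simp
    qed
  qed
  then have "minimal_vanishing_sum S f" using S unfolding P_def minimal_vanishing_sum_def by blast
  then show ?thesis using that S unfolding P_def by blast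
qed

text \<open>Mann's argument at a prime \<open>p\<close> dividing the common order \<open>m = p m'\<close> of the roots: the
  twists \<open>\<zeta> \<mapsto> \<zeta>\<^sup>1\<^sup>+\<^sup>m\<^sup>'\<^sup>k\<close> fix the sum whenever \<open>1 + m'k\<close> is a unit mod \<open>m\<close>, and Fourier
  inversion over the classes of \<open>x\<^sub>i\<^sup>m\<^sup>'\<close> (a \<open>p\<close>-th root of unity) leaves room for at most one
  exceptional \<open>k\<close>; minimality forces this \<open>k\<close> to exist, whence \<open>p \<nmid> m'\<close>, and then every one
  of the \<open>p\<close> classes is nonempty.\<close>
lemma minimal_vanishing_sum_prime_divisor:
  fixes c x :: "'i \<Rightarrow> complex"
  assumes fin: "finite K" and i0: "i0 \<in> K" "x i0 = 1"
    and rat: "\<forall>i\<in>K. c i \<in> \<rat>"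
    and min: "minimal_vanishing_sum K (\<lambda>i. c i * x i)"
    and m: "m > 0" "\<forall>i\<in>K. x i ^ m = 1" "\<And>n. 0 < n \<Longrightarrow> n < m \<Longrightarrow> \<exists>i\<in>K. x i ^ n \<noteq> 1"
    and p: "prime p" "p dvd m"
  shows "p \<le> card K \<and> \<not> p\<^sup>2 dvd m"
proof -
  have van: "(\<Sum>i\<in>K. c i * x i) = 0"
    and only: "\<And>I. I \<subseteq> K \<Longrightarrow> I \<noteq> {} \<Longrightarrow> (\<Sum>i\<in>I. c i * x i) = 0 \<Longrightarrow> I = K"
    using min unfolding minimal_vanishing_sum_def by blast+
  obtain m' where m': "m = p * m'" using p(2) by (elim dvdE)
  have p0: "p > 0" using p(1) prime_gt_0_nat by blast
  have "m' > 0" "m' < m" using m(1) m' prime_gt_1_nat[OF p(1)] by auto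
  define A where "A \<omega> = (\<Sum>i | i \<in> K \<and> x i ^ m' = \<omega>. c i * x i)" for \<omega>
  define T where "T k = (\<Sum>i\<in>K. c i * x i * (x i ^ m') ^ k)" for k
  have classes: "\<forall>i\<in>K. (x i ^ m') ^ p = 1"
    using m(2) by (simp flip: power_mult add: m' mult.commute)
  have inversion: "of_nat p * A \<omega> = (\<Sum>k<p. T k / \<omega> ^ k)" if "\<omega> ^ p = 1" for \<omega>
    unfolding A_def T_def using fibre_sum_fourier_inversion[OF fin p0 classes that] .
  have T_0: "T k = 0" if "coprime (1 + m' * k) m" for k
  proof -
    have "T k = (\<Sum>i\<in>K. c i * x i ^ (1 + m' * k))"
      unfolding T_def by (simp add: power_add power_mult mult.assoc)
    also have "\<dots> = 0"
      by (rule rat_combination_roots_unity_pow_coprime[OF fin rat m(1,2) van that])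
    finally show ?thesis .
  qed
  have "A 1 \<noteq> 0"
  proof
    assume "A 1 = 0"
    then have "sum (\<lambda>i. c i * x i) {i \<in> K. x i ^ m' = 1} = 0" unfolding A_def .
    moreover have "i0 \<in> {i \<in> K. x i ^ m' = 1}" using i0 by simp
    ultimately have "{i \<in> K. x i ^ m' = 1} = K" using only[of "{i \<in> K. x i ^ m' = 1}"] by blast
    then show False using m(3)[OF \<open>m' > 0\<close> \<open>m' < m\<close>] by blast
  qed
  have "\<exists>k<p. \<not> coprime (1 + m' * k) m"
  proof (rule ccontr)
    assume "\<not> (\<exists>k<p. \<not> coprime (1 + m' * k) m)"
    then have "of_nat p * A 1 = 0" using inversion[of 1] T_0 by simp
    then show False using \<open>A 1 \<noteq> 0\<close> p0 by simp
  qed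
  then obtain k0 where k0: "k0 < p" "\<not> coprime (1 + m' * k0) m" by blast
  have "\<not> coprime (1 + m' * k0) (p * m')" using k0(2) m' by simp
  then have pm': "\<not> p dvd m'" using not_coprime_twist(2)[OF p(1)] by blast
  have A_eq: "of_nat p * A \<omega> = T k0 / \<omega> ^ k0" if "\<omega> ^ p = 1" for \<omega>
  proof -
    have "T k = 0" if "k < p" "k \<noteq> k0" for k
      using T_0 not_coprime_twist_unique[OF p(1) that(1) k0(1)] that(2) k0(2) m' by auto
    then have "(\<Sum>k<p. T k / \<omega> ^ k) = (\<Sum>k\<in>{k0}. T k / \<omega> ^ k)"
      using k0(1) by (intro sum.mono_neutral_right) auto
    then show ?thesis using inversion[OF that] by simp
  qed
  have "of_nat p * A 1 = T k0" using A_eq[of 1] by simp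
  then have "T k0 \<noteq> 0" using \<open>A 1 \<noteq> 0\<close> p0 by (metis mult_eq_0_iff of_nat_eq_0_iff neq0_conv)
  have "\<omega> \<in> (\<lambda>i. x i ^ m') ` K" if \<omega>: "\<omega> ^ p = 1" for \<omega>
  proof -
    have "\<omega> \<noteq> 0" using \<omega> p0 by (auto simp: zero_power)
    then have "A \<omega> \<noteq> 0" using A_eq[OF \<omega>] \<open>T k0 \<noteq> 0\<close> by auto
    then have "{i. i \<in> K \<and> x i ^ m' = \<omega>} \<noteq> {}" unfolding A_def by (metis sum.empty)
    then show ?thesis by blast
  qed
  then have "p \<le> card K" by (rule card_ge_if_onto_roots_unity[OF fin p0])
  moreover have "\<not> p\<^sup>2 dvd m" using pm' p0 unfolding m' by (simp add: power2_eq_square)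
  ultimately show ?thesis ..
qed

lemma squarefree_dvd_primorial:
  fixes m n :: nat
  assumes sf: "squarefree m" and small: "\<And>p. prime p \<Longrightarrow> p dvd m \<Longrightarrow> p \<le> n"
  shows "m dvd (\<Prod>p\<in>{p. prime p \<and> p \<le> n}. p)"
proof -
  have m0: "m \<noteq> 0" using sf by (metis not_squarefree_0)
  have "m = (\<Prod>p\<in>prime_factors m. p ^ multiplicity p m)" using prod_prime_factors[OF m0] by simp
  also have "\<dots> = (\<Prod>p\<in>prime_factors m. p)"
    using squarefree_factorial_semiring'[OF m0] sf by simp
  also have "\<dots> dvd (\<Prod>p\<in>{p. prime p \<and> p \<le> n}. p)"
    using small by (intro prod_dvd_prod_subset) (auto simp: in_prime_factors_iff)
  finally show ?thesis .
qed

lemma minimal_vanishing_sum_divide: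
  fixes f :: "'i \<Rightarrow> 'a::field"
  assumes "a \<noteq> 0" "minimal_vanishing_sum K f"
  shows "minimal_vanishing_sum K (\<lambda>i. f i / a)"
  using assms unfolding minimal_vanishing_sum_def by (simp flip: sum_divide_distrib)

lemma roots_of_unity_common_exponent:
  assumes "finite K" "\<forall>i\<in>K. root_of_unity (x i)"
  obtains M where "M > 0" "\<forall>i\<in>K. x i ^ M = 1"
proof -
  obtain N where N: "\<forall>i\<in>K. N i > 0 \<and> x i ^ N i = 1"
    using assms(2) unfolding root_of_unity_def by metis
  have "x i ^ prod N K = 1" if iK: "i \<in> K" for i
  proof -
    obtain t where "prod N K = N i * t" using dvd_prodI[OF assms(1) iK, of N] by (elim dvdE)
    then show ?thesis using N iK by (simp add: power_mult)
  qed
  moreover have "prod N K > 0" using N by (simp add: prod_pos)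
  ultimately show ?thesis using that by blast
qed

theorem minimal_vanishing_sum_roots_unity_quotient:
  fixes c x :: "'i \<Rightarrow> complex"
  assumes fin: "finite K" and ij: "i \<in> K" "j \<in> K"
    and rat: "\<forall>i\<in>K. c i \<in> \<rat>" and roots: "\<forall>i\<in>K. root_of_unity (x i)"
    and min: "minimal_vanishing_sum K (\<lambda>i. c i * x i)"
  shows "(x j / x i) ^ (\<Prod>p\<in>{p. prime p \<and> p \<le> card K}. p) = 1"
proof -
  define \<rho> where "\<rho> l = x l / x i" for l
  obtain M where M: "M > 0" "\<forall>l\<in>K. x l ^ M = 1"
    using roots_of_unity_common_exponent[OF fin roots] by blast
  have "x i \<noteq> 0" using M ij(1) by (auto simp: zero_power)
  have "\<exists>n. 0 < n \<and> (\<forall>l\<in>K. \<rho> l ^ n = 1)"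
    using M ij(1) unfolding \<rho>_def by (intro exI[of _ M]) (simp add: power_divide)
  then obtain m where m: "0 < m" "\<forall>l\<in>K. \<rho> l ^ m = 1"
    and least: "\<And>n. 0 < n \<Longrightarrow> n < m \<Longrightarrow> \<exists>l\<in>K. \<rho> l ^ n \<noteq> 1"
    unfolding exists_least_iff[of "\<lambda>n. 0 < n \<and> (\<forall>l\<in>K. \<rho> l ^ n = 1)"] by blast
  have "minimal_vanishing_sum K (\<lambda>l. c l * \<rho> l)"
    using minimal_vanishing_sum_divide[OF \<open>x i \<noteq> 0\<close> min] unfolding \<rho>_def by (simp add: mult_divide_mult_cancel_left times_divide_eq_right)
  then have prime_divisors: "p \<le> card K \<and> \<not> p\<^sup>2 dvd m" if "prime p" "p dvd m" for p
    using minimal_vanishing_sum_prime_divisor[OF fin ij(1) _ rat _ m least that] \<open>x i \<noteq> 0\<close>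
    unfolding \<rho>_def by simp
  have "squarefree m" using prime_divisors m(1)
    by (subst squarefree_factorial_semiring) (auto dest: dvd_mult_left simp: power2_eq_square)
  then have "m dvd (\<Prod>p\<in>{p. prime p \<and> p \<le> card K}. p)"
    using prime_divisors by (intro squarefree_dvd_primorial) auto
  then show ?thesis using m(2) ij(2) unfolding \<rho>_def by (auto elim!: dvdE simp: power_mult)
qed

lemma Z_set_coordinate_quotient:
  assumes zs: "zs \<in> Z_set a k" and ys: "ys \<in> Z_set a k" and i: "i < k"
  shows "\<exists>j<k. (zs ! i / ys ! j) ^ primorial_2k k = 1"
proof -
  from zs obtain c where rz: "\<forall>i<k. root_of_unity (zs ! i)" and cr: "\<forall>i<k. c i \<in> \<rat>"
    and cs: "(\<Sum>i<k. c i * zs ! i) = a"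
    and nondeg: "\<forall>I. I \<subseteq> {..<k} \<and> I \<noteq> {} \<longrightarrow> (\<Sum>i\<in>I. c i * zs ! i) \<noteq> 0"
    unfolding Z_set_def by blast
  from ys obtain b where ry: "\<forall>j<k. root_of_unity (ys ! j)" and br: "\<forall>j<k. b j \<in> \<rat>"
    and bs: "(\<Sum>j<k. b j * ys ! j) = a"
    unfolding Z_set_def by blast
  define K where "K = {..<k} <+> {..<k}"
  define x where "x = case_sum (\<lambda>i. zs ! i) (\<lambda>j. ys ! j)"
  define d where "d = case_sum c (\<lambda>j. - b j)"
  have "(\<Sum>l\<in>K. d l * x l) = (\<Sum>i<k. c i * zs ! i) - (\<Sum>j<k. b j * ys ! j)"
    unfolding K_def by (simp add: sum.Plus d_def x_def sum_negf)
  then have van: "(\<Sum>l\<in>K. d l * x l) = 0" using cs bs by simp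
  have finK: "finite K" and iK: "Inl i \<in> K" unfolding K_def using i by auto
  obtain S where S: "S \<subseteq> K" "Inl i \<in> S" and min: "minimal_vanishing_sum S (\<lambda>l. d l * x l)"
    by (rule minimal_vanishing_subsum_exists[OF finK iK van])
  have "\<exists>j. Inr j \<in> S"
  proof (rule ccontr)
    assume no_Inr: "\<nexists>j. Inr j \<in> S"
    define I where "I = {i. Inl i \<in> S}"
    have "l \<in> Inl ` I" if "l \<in> S" for l
      using that no_Inr unfolding I_def by (cases l) auto
    then have S_eq: "S = Inl ` I" unfolding I_def by auto
    have "(\<Sum>i\<in>I. c i * zs ! i) = (\<Sum>l\<in>S. d l * x l)"
      unfolding S_eq by (simp add: sum.reindex d_def x_def)
    also have "\<dots> = 0" using min by (simp add: minimal_vanishing_sum_def)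
    finally have "(\<Sum>i\<in>I. c i * zs ! i) = 0" .
    moreover have "I \<subseteq> {..<k}" "I \<noteq> {}" using S unfolding I_def K_def by auto
    ultimately show False using nondeg by blast
  qed
  then obtain j where j: "Inr j \<in> S" by blast
  have "j < k" using S(1) j unfolding K_def by auto
  have finS: "finite S" using S(1) finK by (rule finite_subset)
  have "\<forall>l\<in>S. d l \<in> \<rat>" "\<forall>l\<in>S. root_of_unity (x l)"
    using S(1) cr br rz ry unfolding K_def d_def x_def by auto
  then have "(x (Inl i) / x (Inr j)) ^ (\<Prod>p\<in>{p. prime p \<and> p \<le> card S}. p) = 1"
    by (rule minimal_vanishing_sum_roots_unity_quotient[OF finS j S(2) _ _ min])
  moreover have "card S \<le> 2 * k"
    using card_mono[OF finK S(1)] unfolding K_def by (simp add: card_Plus)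
  then have "(\<Prod>p\<in>{p. prime p \<and> p \<le> card S}. p) dvd primorial_2k k"
    unfolding primorial_2k_def by (intro prod_dvd_prod_subset) auto
  then obtain t where "primorial_2k k = (\<Prod>p\<in>{p. prime p \<and> p \<le> card S}. p) * t"
    by (elim dvdE)
  ultimately have "(zs ! i / ys ! j) ^ primorial_2k k = 1" unfolding x_def by (simp add: power_mult)
  then show ?thesis using \<open>j < k\<close> by blast
qed

lemma Z_set_subset_lists:
  assumes ys: "ys \<in> Z_set a k"
  shows "Z_set a k \<subseteq>
    {zs. set zs \<subseteq> (\<lambda>(j, w). ys ! j * w) ` ({..<k} \<times> {w. w ^ primorial_2k k = 1}) \<and> length zs = k}"
proof safe
  fix zs assume zs: "zs \<in> Z_set a k"
  then show "length zs = k" unfolding Z_set_def by blast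
  fix v assume "v \<in> set zs"
  then obtain i where i: "i < k" "v = zs ! i" using \<open>length zs = k\<close> by (auto simp: in_set_conv_nth)
  obtain j where j: "j < k" "(zs ! i / ys ! j) ^ primorial_2k k = 1"
    using Z_set_coordinate_quotient[OF zs ys i(1)] by blast
  have "root_of_unity (ys ! j)" using ys j(1) unfolding Z_set_def by blast
  then have "ys ! j \<noteq> 0" unfolding root_of_unity_def by (auto simp: zero_power)
  then have "v = ys ! j * (zs ! i / ys ! j)" using i by simp
  with j show "v \<in> (\<lambda>(j, w). ys ! j * w) ` ({..<k} \<times> {w. w ^ primorial_2k k = 1})" by force
qed

theorem corollary7:
  fixes k :: nat and a :: complex
  assumes "k \<ge> 1" and "a \<noteq> 0"
  shows "finite (Z_set a k) \<and> card (Z_set a k) \<le> (k * primorial_2k k) ^ k"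
proof (cases "Z_set a k = {}")
  case False
  then obtain ys where ys: "ys \<in> Z_set a k" by blast
  define C where "C = primorial_2k k"
  define T where "T = (\<lambda>(j, w). ys ! j * w) ` ({..<k} \<times> {w. w ^ C = 1})"
  have "C > 0" unfolding C_def primorial_2k_def by (intro prod_pos) (auto simp: prime_gt_0_nat)
  then have fin: "finite ({..<k} \<times> {w::complex. w ^ C = 1})" by (simp add: finite_roots_unity)
  have "card T \<le> card ({..<k} \<times> {w::complex. w ^ C = 1})"
    unfolding T_def by (rule card_image_le[OF fin])
  also have "\<dots> = k * C" using card_roots_unity_eq[OF \<open>C > 0\<close>] by (simp add: card_cartesian_product)
  finally have T: "finite T" "card T \<le> k * C" using fin unfolding T_def by simp_all
  have lists: "finite {zs. set zs \<subseteq> T \<and> length zs = k}"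
    by (rule finite_lists_length_eq[OF T(1)])
  have sub: "Z_set a k \<subseteq> {zs. set zs \<subseteq> T \<and> length zs = k}"
    using Z_set_subset_lists[OF ys] unfolding T_def C_def .
  have "card (Z_set a k) \<le> card T ^ k"
    using card_mono[OF lists sub] card_lists_length_eq[OF T(1)] by simp
  also have "\<dots> \<le> (k * C) ^ k" using T(2) by (rule power_mono) simp
  finally show ?thesis using finite_subset[OF sub lists] unfolding C_def by blast
qed simp

end
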